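(* Let $\mu$ be a probability measure on $\mathbb{R}$ whose support is not included in $(-\infty,0)$, and let $\phi(\lambda)=\int_{\mathbb{R}}e^{\lambda x}\,\mu(dx)\in(0,\infty]$, $\lambda\in\mathbb{R}$. Consider the conditions (a) there exists $\lambda<0$ such that $\phi(\lambda)<1$; (b) there exists $\lambda>0$ such that $\phi(\lambda)\in(1,\infty)$. The knowledge of the restrictions of the measures $\mu^{*n}$, $n\ge1$, to $[0,\infty)$ allows one to determine whether $\mu$ satisfies (a) and whether $\mu$ satisfies (b). When at least one of (a), (b) holds, $\mu\in\mathscr{C}$, i.e. every probability measure $\mu_1$ on $\mathbb{R}$ with $\mu_1^{*n}=\mu^{*n}$ on the Borel subsets of $[0,\infty)$ for all $n\ge1$ satisfies $\mu_1=\mu$.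
   Context: $\mu^{*n}$ is the $n$-fold convolution power of $\mu$. "Determine" means: if $\mu_1$ is a probability measure with $\mu_1^{*n}=\mu^{*n}$ on $[0,\infty)$ for all $n\ge1$, then $\mu_1$ satisfies (a) iff $\mu$ does, and $\mu_1$ satisfies (b) iff $\mu$ does. $\mathscr{C}$ is the set of probability measures on $\mathbb{R}$ determined in this sense by their convolution powers restricted to $[0,\infty)$. *)

theory Defs
  imports "HOL-Probability.Probability" "HOL-Probability.Convolution"
begin

definition measure_support :: "real measure \<Rightarrow> real set" where
  "measure_support M = {x. \<forall>e>0. emeasure M (ball x e) > 0}"

fun conv_pow :: "real measure \<Rightarrow> nat \<Rightarrow> real measure" where
  "conv_pow M 0 = return borel 0"
| "conv_pow M (Suc n) = convolution M (conv_pow M n)"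

definition laplace :: "real measure \<Rightarrow> real \<Rightarrow> ennreal" where
  "laplace M l = (\<integral>\<^sup>+ x. ennreal (exp (l * x)) \<partial>M)"

definition cond_a :: "real measure \<Rightarrow> bool" where
  "cond_a M \<longleftrightarrow> (\<exists>l<0. laplace M l < 1)"

definition cond_b :: "real measure \<Rightarrow> bool" where
  "cond_b M \<longleftrightarrow> (\<exists>l>0. 1 < laplace M l \<and> laplace M l < \<infinity>)"

definition same_pos_powers :: "real measure \<Rightarrow> real measure \<Rightarrow> bool" where
  "same_pos_powers M N \<longleftrightarrow>
     (\<forall>n\<ge>1. \<forall>A\<in>sets borel. A \<subseteq> {0..} \<longrightarrow>
        emeasure (conv_pow M n) A = emeasure (conv_pow N n) A)"

end

theory Submission
  imports Defs "HOL-Complex_Analysis.Complex_Analysis"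
begin

text \<open>Restricting \<open>\<mu>\<^sup>*\<^sup>n\<close> to \<open>[0,\<infinity>)\<close> forgets only the contribution of \<open>(-\<infinity>,0)\<close> to
  \<open>\<phi>(\<lambda>)\<^sup>n = \<integral> e\<^sup>\<lambda>\<^sup>x d\<mu>\<^sup>*\<^sup>n\<close>, and that contribution is at most \<open>\<phi>(\<lambda>')\<^sup>n\<close> for any \<open>\<lambda>' \<le> \<lambda>\<close>.
  Hence if \<open>\<phi>\<^sub>\<mu>(\<lambda>') < \<phi>\<^sub>\<mu>(\<lambda>) < \<infinity>\<close>, letting \<open>n \<rightarrow> \<infinity>\<close> in
  \<open>\<phi>\<^sub>\<mu>(\<lambda>)\<^sup>n \<le> \<phi>\<^sub>\<mu>\<^sub>1(\<lambda>)\<^sup>n + \<phi>\<^sub>\<mu>(\<lambda>')\<^sup>n\<close> gives \<open>\<phi>\<^sub>\<mu>(\<lambda>) \<le> \<phi>\<^sub>\<mu>\<^sub>1(\<lambda>)\<close>. Under (b) this applies, in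
  both directions, to \<open>\<lambda>' = 0\<close> and \<open>\<lambda>\<close> slightly below the given point; under (a) to \<open>\<lambda>'\<close> the
  given point and \<open>\<lambda>\<close> slightly below \<open>0\<close>. So the two transforms are finite and equal on an
  interval, and a moment generating function on an interval determines the measure (analytic
  continuation to a strip, exponential tilting, Levy's uniqueness theorem).

  Transferring (a) to \<open>\<mu>\<^sub>1\<close> needs more: \<open>\<mu>\<^sub>1\<^sup>*\<^sup>n(-\<infinity>,0) = \<mu>\<^sup>*\<^sup>n(-\<infinity>,0) \<le> \<phi>\<^sub>\<mu>(\<lambda>\<^sub>0)\<^sup>n\<close> decays
  geometrically, which forces geometric left tails of \<open>\<mu>\<^sub>1\<close> and thus \<open>\<phi>\<^sub>\<mu>\<^sub>1 < \<infinity>\<close> slightly left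
  of \<open>0\<close>; near \<open>0\<close> the same splitting argument then yields \<open>\<phi>\<^sub>\<mu>\<^sub>1(\<lambda>) < 1\<close>.\<close>

lemma eventually_sum_powers_less_one:
  fixes a b c :: real
  assumes "0 \<le> a" "a < 1" "0 \<le> b" "b < 1" "0 \<le> c" "c < 1"
  shows "\<forall>\<^sub>F n in sequentially. a ^ n + b ^ n + c ^ n < 1"
proof -
  have "(\<lambda>n. a ^ n + b ^ n + c ^ n) \<longlonglongrightarrow> 0 + 0 + 0"
    by (intro tendsto_add LIMSEQ_power_zero) (use assms in auto)
  then show ?thesis
    by (rule order_tendstoD) simp
qed

lemma exp_mult_le_exp_add_exp:
  fixes a b c x :: real
  assumes "a \<le> c" "c \<le> b"
  shows "exp (c * x) \<le> exp (a * x) + exp (b * x)"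
proof (cases "x \<ge> 0")
  case True
  then have "exp (c * x) \<le> exp (b * x)"
    using assms by (simp add: mult_right_mono)
  then show ?thesis by (smt (verit) exp_gt_zero)
next
  case False
  then have "exp (c * x) \<le> exp (a * x)"
    using assms by (simp add: mult_right_mono_neg)
  then show ?thesis by (smt (verit) exp_gt_zero)
qed

lemma laplace_zero: "prob_space M \<Longrightarrow> laplace M 0 = 1"
  unfolding laplace_def by (simp add: prob_space.emeasure_space_1)

lemma integrable_exp_of_laplace_finite:
  assumes [measurable_cong]: "sets M = sets borel" and "laplace M t < \<infinity>"
  shows "integrable M (\<lambda>x. exp (t * x))"
proof (rule integrableI_bounded)
  show "(\<integral>\<^sup>+ x. ennreal (norm (exp (t * x))) \<partial>M) < \<infinity>"
    using assms(2) by (simp add: laplace_def)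
qed measurable

lemma laplace_eq_integral:
  assumes "sets M = sets borel" "laplace M t < \<infinity>"
  shows "laplace M t = ennreal (\<integral>x. exp (t * x) \<partial>M)"
  unfolding laplace_def
  by (rule nn_integral_eq_integral[OF integrable_exp_of_laplace_finite[OF assms]]) auto

lemma laplace_finite_between:
  assumes [measurable_cong]: "sets K = sets borel"
    and "a \<le> t" "t \<le> b" "laplace K a < \<infinity>" "laplace K b < \<infinity>"
  shows "laplace K t < \<infinity>"
proof -
  have "laplace K t \<le> (\<integral>\<^sup>+x. ennreal (exp (a * x)) + ennreal (exp (b * x)) \<partial>K)"
    unfolding laplace_def
    using exp_mult_le_exp_add_exp[OF assms(2,3)]
    by (intro nn_integral_mono) (simp flip: ennreal_plus)
  also have "\<dots> = laplace K a + laplace K b"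
    unfolding laplace_def by (rule nn_integral_add) auto
  also have "\<dots> < \<infinity>"
    using assms by simp
  finally show ?thesis .
qed

lemma laplace_mult_le:
  assumes "prob_space K" and [measurable_cong]: "sets K = sets borel"
    and "0 \<le> \<theta>" "\<theta> \<le> 1"
  shows "laplace K (\<theta> * a) \<le> ennreal \<theta> * laplace K a + ennreal (1 - \<theta>)"
proof -
  have "exp (\<theta> * a * x) \<le> \<theta> * exp (a * x) + (1 - \<theta>)" for x
    using convex_onD[OF exp_convex assms(3,4), of 0 "a * x"] by (simp add: mult_ac)
  then have "laplace K (\<theta> * a) \<le> (\<integral>\<^sup>+x. ennreal \<theta> * ennreal (exp (a * x)) + ennreal (1 - \<theta>) \<partial>K)"
    unfolding laplace_def
    using assms(3,4) by (intro nn_integral_mono) (simp add: ennreal_leI flip: ennreal_plus ennreal_mult)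
  also have "\<dots> = ennreal \<theta> * laplace K a + ennreal (1 - \<theta>)"
    unfolding laplace_def
    by (subst nn_integral_add) (auto simp: nn_integral_cmult prob_space.emeasure_space_1[OF assms(1)])
  finally show ?thesis .
qed

lemma min_mult_le_mult:
  fixes u \<delta> t x :: real
  assumes "u - \<delta> \<le> t" "t \<le> u"
  shows "min (u * x) ((u - \<delta>) * x) \<le> t * x"
proof (cases "x \<ge> 0")
  case True
  then show ?thesis
    using assms(1) by (intro min.coboundedI2 mult_right_mono)
next
  case False
  then show ?thesis
    using assms(2) by (intro min.coboundedI1 mult_right_mono_neg) auto
qed

lemma laplace_eq_SUP_left:
  assumes [measurable_cong]: "sets K = sets borel"
  shows "laplace K u =
    (SUP k. \<integral>\<^sup>+x. ennreal (exp (min (u * x) ((u - inverse (real (Suc k))) * x))) \<partial>K)"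
proof -
  define f where "f k x = ennreal (exp (min (u * x) ((u - inverse (real (Suc k))) * x)))"
    for k and x :: real
  have "incseq f"
  proof (intro incseq_SucI le_funI)
    fix k and x :: real
    have "inverse (real (Suc (Suc k))) \<le> inverse (real (Suc k))"
      by (rule le_imp_inverse_le) auto
    then have "min (u * x) ((u - inverse (real (Suc k))) * x) \<le> (u - inverse (real (Suc (Suc k)))) * x"
      by (intro min_mult_le_mult) auto
    then show "f k x \<le> f (Suc k) x"
      unfolding f_def by (intro ennreal_leI) simp
  qed
  have "(\<lambda>k. f k x) \<longlonglongrightarrow> ennreal (exp (u * x))" for x
  proof -
    have "(\<lambda>k. min (u * x) ((u - inverse (real (Suc k))) * x)) \<longlonglongrightarrow> min (u * x) ((u - 0) * x)"
      by (intro tendsto_intros LIMSEQ_inverse_real_of_nat)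
    then show ?thesis
      unfolding f_def by (intro tendsto_ennrealI tendsto_intros) simp
  qed
  moreover have "(\<lambda>k. f k x) \<longlonglongrightarrow> (SUP k. f k x)" for x
    using \<open>incseq f\<close> by (intro LIMSEQ_SUP) (auto simp: incseq_def le_fun_def)
  ultimately have "(SUP k. f k x) = ennreal (exp (u * x))" for x
    using LIMSEQ_unique by blast
  then have "laplace K u = (\<integral>\<^sup>+x. (SUP k. f k x) \<partial>K)"
    unfolding laplace_def by simp
  also have "\<dots> = (SUP k. \<integral>\<^sup>+x. f k x \<partial>K)"
    using \<open>incseq f\<close> by (rule nn_integral_monotone_convergence_SUP) (unfold f_def, measurable)
  finally show ?thesis
    by (simp add: f_def)
qed

lemma laplace_gt_on_left_interval:
  assumes "sets K = sets borel" and "v < laplace K u"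
  shows "\<exists>\<delta>>0. \<forall>t. u - \<delta> \<le> t \<and> t \<le> u \<longrightarrow> v < laplace K t"
proof -
  obtain k where k: "v < (\<integral>\<^sup>+x. ennreal (exp (min (u * x) ((u - inverse (real (Suc k))) * x))) \<partial>K)"
    using assms(2) unfolding laplace_eq_SUP_left[OF assms(1)] by (auto simp: less_SUP_iff)
  show ?thesis
  proof (intro exI conjI allI impI)
    fix t assume "u - inverse (real (Suc k)) \<le> t \<and> t \<le> u"
    then have "(\<integral>\<^sup>+x. ennreal (exp (min (u * x) ((u - inverse (real (Suc k))) * x))) \<partial>K) \<le> laplace K t"
      unfolding laplace_def by (intro nn_integral_mono ennreal_leI) (simp add: min_mult_le_mult)
    then show "v < laplace K t"
      using k by simp
  qed simp
qed

definition laplace_nonneg_part :: "real measure \<Rightarrow> real \<Rightarrow> ennreal" where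
  "laplace_nonneg_part K l = (\<integral>\<^sup>+x. indicator {0..} x * ennreal (exp (l * x)) \<partial>K)"

definition laplace_neg_part :: "real measure \<Rightarrow> real \<Rightarrow> ennreal" where
  "laplace_neg_part K l = (\<integral>\<^sup>+x. indicator {..<0} x * ennreal (exp (l * x)) \<partial>K)"

lemma laplace_split:
  assumes [measurable_cong]: "sets K = sets borel"
  shows "laplace K l = laplace_nonneg_part K l + laplace_neg_part K l"
proof -
  have "laplace K l = (\<integral>\<^sup>+x. indicator {0..} x * ennreal (exp (l * x)) +
           indicator {..<0} x * ennreal (exp (l * x)) \<partial>K)"
    unfolding laplace_def by (intro nn_integral_cong) (auto simp: indicator_def)
  also have "\<dots> = laplace_nonneg_part K l + laplace_neg_part K l"
    unfolding laplace_nonneg_part_def laplace_neg_part_def by (rule nn_integral_add) auto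
  finally show ?thesis .
qed

lemma laplace_nonneg_part_le: "laplace_nonneg_part K l \<le> laplace K l"
  unfolding laplace_nonneg_part_def laplace_def
  by (intro nn_integral_mono) (simp add: indicator_def)

lemma laplace_neg_part_le:
  assumes "l' \<le> l"
  shows "laplace_neg_part K l \<le> laplace K l'"
  unfolding laplace_neg_part_def laplace_def
proof (intro nn_integral_mono)
  fix x :: real
  show "indicator {..<0} x * ennreal (exp (l * x)) \<le> ennreal (exp (l' * x))"
    using assms by (cases "x < 0") (auto simp: indicator_def intro: mult_right_mono_neg)
qed

lemma laplace_neg_part_le_split:
  assumes [measurable_cong]: "sets K = sets borel" and "0 < T"
  shows "laplace_neg_part K l \<le> ennreal T * emeasure K {..<0} + ennreal (1 / T) * laplace K (2 * l)"
proof -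
  have "exp (l * x) \<le> T + exp (2 * l * x) / T" for x
  proof (cases "exp (l * x) \<le> T")
    case False
    then have "T * exp (l * x) \<le> exp (l * x) * exp (l * x)"
      by (simp add: mult_right_mono)
    also have "\<dots> = exp (2 * l * x)"
      by (simp add: mult.assoc flip: exp_add)
    finally have "exp (l * x) \<le> exp (2 * l * x) / T"
      using \<open>0 < T\<close> by (simp add: pos_le_divide_eq mult.commute)
    then show ?thesis
      using \<open>0 < T\<close> by linarith
  qed (use \<open>0 < T\<close> in \<open>smt (verit) divide_pos_pos exp_gt_zero\<close>)
  then have "ennreal (exp (l * x)) \<le> ennreal T + ennreal (1 / T) * ennreal (exp (2 * l * x))" for x
    using \<open>0 < T\<close> by (simp add: ennreal_leI flip: ennreal_mult ennreal_plus)
  then have "indicator {..<0} x * ennreal (exp (l * x)) \<le>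
      ennreal T * indicator {..<0} x + ennreal (1 / T) * ennreal (exp (2 * l * x))" for x
    by (cases "x < 0") simp_all
  then have "laplace_neg_part K l \<le>
      (\<integral>\<^sup>+x. ennreal T * indicator {..<0} x + ennreal (1 / T) * ennreal (exp (2 * l * x)) \<partial>K)"
    unfolding laplace_neg_part_def by (intro nn_integral_mono)
  also have "\<dots> = ennreal T * emeasure K {..<0} + ennreal (1 / T) * laplace K (2 * l)"
    unfolding laplace_def by (subst nn_integral_add) (auto simp: nn_integral_cmult)
  finally show ?thesis .
qed

lemma emeasure_lessThan_zero_le_laplace:
  assumes [measurable_cong]: "sets K = sets borel" and "l \<le> 0"
  shows "emeasure K {..<0} \<le> laplace K l"
proof -
  have "emeasure K {..<0} = (\<integral>\<^sup>+x. indicator {..<0} x \<partial>K)"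
    by simp
  also have "\<dots> \<le> laplace K l"
    unfolding laplace_def using assms(2)
    by (intro nn_integral_mono) (auto simp: indicator_def mult_nonpos_nonpos)
  finally show ?thesis .
qed

lemma real_distribution_convolution:
  assumes "real_distribution M" "real_distribution N"
  shows "real_distribution (convolution M N)"
proof -
  interpret M: real_distribution M by fact
  interpret N: real_distribution N by fact
  interpret MN: pair_prob_space M N ..
  have "(\<lambda>(x, y). x + y) \<in> borel_measurable (M \<Otimes>\<^sub>M N)"
    by (subst measurable_cong_sets[OF sets_pair_measure_cong[OF M.events_eq_borel N.events_eq_borel] refl])
      measurable
  then show ?thesis
    unfolding convolution_def by (rule MN.real_distribution_distr)
qed

lemma real_distribution_conv_pow:
  assumes "real_distribution M"
  shows "real_distribution (conv_pow M n)"
proof (induction n)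
  case 0
  show ?case
    by (simp add: real_distribution_def real_distribution_axioms_def prob_space_return)
qed (simp add: real_distribution_convolution assms)

lemma sets_conv_pow: "real_distribution M \<Longrightarrow> sets (conv_pow M n) = sets borel"
  using real_distribution.events_eq_borel[OF real_distribution_conv_pow] .

lemma laplace_convolution:
  assumes "finite_measure M" "finite_measure N"
    and [measurable_cong]: "sets M = sets borel" "sets N = sets borel"
  shows "laplace (convolution M N) l = laplace M l * laplace N l"
proof -
  have "laplace (convolution M N) l = (\<integral>\<^sup>+x. \<integral>\<^sup>+y. ennreal (exp (l * x)) * ennreal (exp (l * y)) \<partial>N \<partial>M)"
    unfolding laplace_def using assms
    by (subst nn_integral_convolution) (auto simp: distrib_left exp_add ennreal_mult)
  also have "\<dots> = laplace M l * laplace N l"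
    unfolding laplace_def by (simp add: nn_integral_cmult nn_integral_multc)
  finally show ?thesis .
qed

lemma laplace_conv_pow:
  assumes "real_distribution M"
  shows "laplace (conv_pow M n) l = laplace M l ^ n"
proof (induction n)
  case 0
  show ?case by (simp add: laplace_def nn_integral_return)
next
  case (Suc n)
  interpret M: real_distribution M by fact
  interpret Mn: real_distribution "conv_pow M n"
    using assms by (rule real_distribution_conv_pow)
  show ?case
    using Suc by (simp add: laplace_convolution)
qed

section \<open>Convolution powers agreeing on the half-line\<close>

lemma same_pos_powersD:
  "same_pos_powers M N \<Longrightarrow> n \<ge> 1 \<Longrightarrow> A \<in> sets borel \<Longrightarrow> A \<subseteq> {0..} \<Longrightarrow>
    emeasure (conv_pow M n) A = emeasure (conv_pow N n) A"
  unfolding same_pos_powers_def by blast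

lemma same_pos_powers_sym: "same_pos_powers M N \<Longrightarrow> same_pos_powers N M"
  unfolding same_pos_powers_def by metis

lemma same_pos_powers_laplace_nonneg_part:
  assumes "same_pos_powers M N" "n \<ge> 1" "real_distribution M" "real_distribution N"
  shows "laplace_nonneg_part (conv_pow M n) l = laplace_nonneg_part (conv_pow N n) l"
proof -
  interpret Mn: real_distribution "conv_pow M n"
    using assms(3) by (rule real_distribution_conv_pow)
  interpret Nn: real_distribution "conv_pow N n"
    using assms(4) by (rule real_distribution_conv_pow)
  have "density (conv_pow M n) (indicator {0..}) = density (conv_pow N n) (indicator {0..})"
  proof (rule measure_eqI)
    fix X assume "X \<in> sets (density (conv_pow M n) (indicator {0..}))"
    then have "X \<in> sets borel" by simp
    have "emeasure (conv_pow M n) ({0..} \<inter> X) = emeasure (conv_pow N n) ({0..} \<inter> X)"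
      using \<open>X \<in> sets borel\<close> by (intro same_pos_powersD[OF assms(1,2)]) auto
    then show "emeasure (density (conv_pow M n) (indicator {0..})) X =
        emeasure (density (conv_pow N n) (indicator {0..})) X"
      using \<open>X \<in> sets borel\<close> by (simp add: emeasure_restricted)
  qed simp
  then show ?thesis
    unfolding laplace_nonneg_part_def by (simp flip: nn_integral_density)
qed

lemma same_pos_powers_emeasure_lessThan_zero:
  assumes "same_pos_powers M N" "n \<ge> 1" "real_distribution M" "real_distribution N"
  shows "emeasure (conv_pow M n) {..<0} = emeasure (conv_pow N n) {..<0}"
proof -
  interpret Mn: real_distribution "conv_pow M n"
    using assms(3) by (rule real_distribution_conv_pow)
  interpret Nn: real_distribution "conv_pow N n"
    using assms(4) by (rule real_distribution_conv_pow)
  have "{..<0::real} = UNIV - {0..}" by auto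
  then have "measure (conv_pow M n) {..<0} = measure (conv_pow N n) {..<0}"
    using same_pos_powersD[OF assms(1,2), of "{0..}"] Mn.prob_compl[of "{0..}"] Nn.prob_compl[of "{0..}"]
    by (simp add: measure_def)
  then show ?thesis
    by (simp add: Mn.emeasure_eq_measure Nn.emeasure_eq_measure)
qed

text \<open>Key inequality: \<open>\<phi>\<^sub>N(l)\<^sup>n \<le> \<phi>\<^sub>M(l)\<^sup>n + \<phi>\<^sub>N(l')\<^sup>n\<close> for all \<open>n \<ge> 1\<close>, since only the
  negative parts of the convolution powers differ.\<close>

lemma laplace_le_of_same_pos_powers:
  assumes "same_pos_powers M N" "real_distribution M" "real_distribution N"
    and "l' \<le> l" "laplace N l' < laplace N l" "laplace N l < \<infinity>"
  shows "laplace N l \<le> laplace M l"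
proof (rule ccontr)
  assume "\<not> laplace N l \<le> laplace M l"
  then have "laplace M l < laplace N l" by simp
  define A B C where "A = enn2real (laplace M l)" "B = enn2real (laplace N l)"
    "C = enn2real (laplace N l')"
  have eq: "laplace M l = ennreal A" "laplace N l = ennreal B" "laplace N l' = ennreal C"
    using assms(5,6) \<open>laplace M l < laplace N l\<close> by (auto simp: A_B_C_def ennreal_enn2real_if)
  have "0 \<le> A" "0 \<le> B" "0 \<le> C"
    by (simp_all add: A_B_C_def)
  then have "A < B" "C < B"
    using assms(5) \<open>laplace M l < laplace N l\<close> unfolding eq by (simp_all add: ennreal_less_iff)
  have bound: "B ^ n \<le> A ^ n + C ^ n" if "n \<ge> 1" for n
  proof -
    have "ennreal (B ^ n) = laplace (conv_pow N n) l"
      using assms(3) \<open>0 \<le> B\<close> by (simp add: laplace_conv_pow eq ennreal_power)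
    also have "\<dots> = laplace_nonneg_part (conv_pow M n) l + laplace_neg_part (conv_pow N n) l"
      using same_pos_powers_laplace_nonneg_part[OF assms(1) \<open>n \<ge> 1\<close> assms(2,3)]
      by (simp add: laplace_split sets_conv_pow assms(3))
    also have "\<dots> \<le> laplace (conv_pow M n) l + laplace (conv_pow N n) l'"
      using assms(4) by (intro add_mono laplace_nonneg_part_le laplace_neg_part_le)
    also have "\<dots> = ennreal (A ^ n + C ^ n)"
      using assms(2,3) \<open>0 \<le> A\<close> \<open>0 \<le> C\<close> by (simp add: laplace_conv_pow eq ennreal_power ennreal_plus)
    finally show ?thesis
      using \<open>0 \<le> A\<close> \<open>0 \<le> C\<close> by (simp add: ennreal_le_iff flip: ennreal_plus)
  qed
  have "\<forall>\<^sub>F n in sequentially. (A / B) ^ n + (C / B) ^ n + 0 ^ n < 1"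
    using \<open>0 \<le> A\<close> \<open>A < B\<close> \<open>0 \<le> C\<close> \<open>C < B\<close> by (intro eventually_sum_powers_less_one) auto
  then obtain k where k: "\<And>n. n \<ge> k \<Longrightarrow> (A / B) ^ n + (C / B) ^ n + 0 ^ n < 1"
    by (auto simp: eventually_sequentially)
  have "A ^ Suc k + C ^ Suc k < B ^ Suc k"
    using k[of "Suc k"] \<open>0 \<le> A\<close> \<open>A < B\<close>
    by (simp add: power_divide divide_less_eq del: power_Suc flip: add_divide_distrib)
  with bound[of "Suc k"] show False
    by simp
qed

lemma laplace_finite_of_same_pos_powers:
  assumes "same_pos_powers M N" "real_distribution M" "real_distribution N"
    and "0 \<le> l" "laplace N l < \<infinity>"
  shows "laplace M l < \<infinity>"
proof -
  have "laplace M l = laplace_nonneg_part (conv_pow M 1) l + laplace_neg_part (conv_pow M 1) l"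
    using laplace_conv_pow[OF assms(2), of 1 l] laplace_split[OF sets_conv_pow[OF assms(2)], of 1 l]
    by simp
  also have "\<dots> = laplace_nonneg_part (conv_pow N 1) l + laplace_neg_part (conv_pow M 1) l"
    by (simp only: same_pos_powers_laplace_nonneg_part[OF assms(1) _ assms(2,3)])
  also have "\<dots> \<le> laplace (conv_pow N 1) l + laplace (conv_pow M 1) 0"
    using assms(4) by (intro add_mono laplace_nonneg_part_le laplace_neg_part_le)
  also have "\<dots> = laplace N l + laplace M 0"
    by (simp only: laplace_conv_pow assms(2,3) power_one_right)
  also have "\<dots> < \<infinity>"
    using assms(2,5) by (simp add: laplace_zero real_distribution_def)
  finally show ?thesis .
qed

lemma cond_b_of_same_pos_powers:
  assumes "same_pos_powers M N" "real_distribution M" "real_distribution N" "cond_b N"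
  shows "cond_b M"
proof -
  obtain l where l: "l > 0" "1 < laplace N l" "laplace N l < \<infinity>"
    using assms(4) unfolding cond_b_def by blast
  have "laplace N 0 = 1"
    using assms(3) by (simp add: laplace_zero real_distribution_def)
  then have "laplace N l \<le> laplace M l"
    using l by (intro laplace_le_of_same_pos_powers[OF assms(1-3), of 0]) auto
  moreover have "laplace M l < \<infinity>"
    using l by (intro laplace_finite_of_same_pos_powers[OF assms(1-3)]) auto
  ultimately show ?thesis
    unfolding cond_b_def using l by (intro exI[of _ l]) auto
qed

section \<open>Transfer of condition (a)\<close>

lemma emeasure_convolution_ge:
  assumes "finite_measure A" "finite_measure B"
    and [measurable_cong]: "sets A = sets borel" "sets B = sets borel"
    and "S \<in> sets borel" "T \<in> sets borel" "U \<in> sets borel"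
    and "\<And>x y. x \<in> S \<Longrightarrow> y \<in> T \<Longrightarrow> x + y \<in> U"
  shows "emeasure A S * emeasure B T \<le> emeasure (convolution A B) U"
proof -
  have "emeasure A S * emeasure B T = (\<integral>\<^sup>+x. \<integral>\<^sup>+y. indicator S x * indicator T y \<partial>B \<partial>A)"
    using assms(5,6) by (simp add: nn_integral_cmult nn_integral_multc)
  also have "\<dots> \<le> (\<integral>\<^sup>+x. \<integral>\<^sup>+y. indicator U (x + y) \<partial>B \<partial>A)"
    using assms(8) by (intro nn_integral_mono) (auto simp: indicator_def)
  also have "\<dots> = emeasure (convolution A B) U"
    using assms by (simp add: convolution_emeasure')
  finally show ?thesis .
qed

lemma emeasure_conv_pow_atMost_ge:
  assumes "real_distribution M"
  shows "emeasure M {..K} ^ n \<le> emeasure (conv_pow M n) {..real n * K}"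
proof (induction n)
  case 0
  show ?case by simp
next
  case (Suc n)
  interpret M: real_distribution M by fact
  interpret Mn: real_distribution "conv_pow M n"
    using assms by (rule real_distribution_conv_pow)
  have "emeasure M {..K} ^ Suc n \<le> emeasure M {..K} * emeasure (conv_pow M n) {..real n * K}"
    using Suc by (simp add: mult_left_mono)
  also have "\<dots> \<le> emeasure (conv_pow M (Suc n)) {..real (Suc n) * K}"
    by simp (rule emeasure_convolution_ge; auto simp: algebra_simps)
  finally show ?case .
qed

text \<open>The tails are controlled through
  \<open>M(-\<infinity>, -(n+1)K) \<cdot> M(-\<infinity>, K]\<^sup>n \<le> M\<^sup>*\<^sup>(\<^sup>n\<^sup>+\<^sup>1\<^sup>)(-\<infinity>, 0) \<le> r\<^sup>n\<^sup>+\<^sup>1\<close>.\<close>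

lemma measure_lower_tail_le:
  assumes "real_distribution M" "0 \<le> K" "0 < q" "q \<le> measure M {..K}" "0 \<le> r"
    and neg: "\<And>n. n \<ge> 1 \<Longrightarrow> emeasure (conv_pow M n) {..<0} \<le> ennreal (r ^ n)"
  shows "measure M {..< - (real (Suc n) * K)} \<le> (r / q) ^ Suc n"
proof -
  interpret M: real_distribution M by fact
  interpret Mn: real_distribution "conv_pow M n"
    using assms(1) by (rule real_distribution_conv_pow)
  define m where "m = measure M {..< - (real (Suc n) * K)}"
  have "ennreal (m * q ^ n) \<le> emeasure M {..< - (real (Suc n) * K)} * emeasure M {..K} ^ n"
    using assms(3,4) by (simp add: m_def M.emeasure_eq_measure ennreal_mult ennreal_power power_mono
        mult_left_mono ennreal_leI flip: ennreal_power)
  also have "\<dots> \<le> emeasure M {..< - (real (Suc n) * K)} * emeasure (conv_pow M n) {..real n * K}"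
    by (intro mult_left_mono emeasure_conv_pow_atMost_ge assms(1)) simp
  also have "\<dots> \<le> emeasure (conv_pow M (Suc n)) {..<0}"
    using assms(2) by simp (rule emeasure_convolution_ge; auto simp: algebra_simps)
  also have "\<dots> \<le> ennreal (r ^ Suc n)"
    by (rule neg) simp
  finally have "m * q ^ n \<le> r ^ Suc n"
    using assms(5) by simp
  then have "m \<le> q * (r / q) ^ Suc n"
    using assms(3) by (simp add: field_simps)
  also have "\<dots> \<le> (r / q) ^ Suc n"
    using assms(3,5) order_trans[OF assms(4) M.prob_le_1] by (intro mult_left_le_one_le) auto
  finally show ?thesis
    by (simp add: m_def)
qed

lemma exp_le_geometric_indicator_series:
  fixes K E x :: real
  assumes "0 < K" "1 < E"
  shows "ennreal (exp (- (ln E / K) * x)) \<le> 1 + (\<Sum>m. ennreal (E ^ Suc m) * indicator {..< - (real m * K)} x)"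
proof (cases "x \<ge> 0")
  case True
  then have "exp (- (ln E / K) * x) \<le> 1"
    using assms by (simp add: mult_nonneg_nonneg)
  then show ?thesis
    by (intro order_trans[OF _ add_increasing2[OF zero_le order.refl]]) (simp add: ennreal_le_1)
next
  case False
  define y where "y = - x / K"
  define m where "m = nat (\<lceil>y\<rceil> - 1)"
  have "0 < y"
    using False assms(1) by (simp add: y_def divide_neg_pos)
  then have "real m = real_of_int \<lceil>y\<rceil> - 1"
    by (simp add: m_def)
  then have "real m < - x / K" "- x / K \<le> real (Suc m)"
    unfolding y_def[symmetric] by linarith+
  then have "x < - (real m * K)" "- x \<le> real (Suc m) * K"
    using assms(1) by (simp_all add: field_simps)
  then have "- x * ln E \<le> real (Suc m) * K * ln E"
    using assms(2) by (intro mult_right_mono) auto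
  then have "exp (- (ln E / K) * x) \<le> exp (real (Suc m) * ln E)"
    using assms(1) by (simp add: field_simps)
  also have "\<dots> = E ^ Suc m"
    using assms(2) by (simp only: exp_of_nat_mult exp_ln)
  finally have "ennreal (exp (- (ln E / K) * x)) \<le> ennreal (E ^ Suc m) * indicator {..< - (real m * K)} x"
    using \<open>x < - (real m * K)\<close> by (simp add: ennreal_leI)
  also have "\<dots> \<le> (\<Sum>m. ennreal (E ^ Suc m) * indicator {..< - (real m * K)} x)"
    using sum_le_suminf[OF summableI, of "{m}"] by simp
  finally show ?thesis
    by (simp add: add_increasing)
qed

lemma laplace_finite_of_geometric_tail:
  assumes "real_distribution M" "0 < K" "0 \<le> \<rho>" "\<rho> < 1"
    and tail: "\<And>n. measure M {..< - (real (Suc n) * K)} \<le> \<rho> ^ Suc n"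
  shows "\<exists>\<eta>>0. laplace M (- \<eta>) < \<infinity>"
proof -
  interpret M: real_distribution M by fact
  define E where "E = 2 / (1 + \<rho>)"
  have "1 < E" "0 \<le> E * \<rho>" "E * \<rho> < 1"
    using assms(3,4) by (auto simp: E_def field_simps)
  have tail': "emeasure M {..< - (real m * K)} \<le> ennreal (\<rho> ^ m)" for m
    using tail[of "m - 1"] M.emeasure_le_1[of UNIV]
    by (cases m) (simp_all add: M.emeasure_eq_measure ennreal_leI del: power_Suc)
  have "summable (\<lambda>m. E * (E * \<rho>) ^ m)"
    using \<open>0 \<le> E * \<rho>\<close> \<open>E * \<rho> < 1\<close> by (intro summable_mult summable_geometric) auto
  then have summable_geom: "summable (\<lambda>m. E ^ Suc m * \<rho> ^ m)"
    by (simp add: power_mult_distrib mult_ac)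
  have "laplace M (- (ln E / K)) \<le>
      (\<integral>\<^sup>+x. 1 + (\<Sum>m. ennreal (E ^ Suc m) * indicator {..< - (real m * K)} x) \<partial>M)"
    unfolding laplace_def using assms(2) \<open>1 < E\<close> by (intro nn_integral_mono exp_le_geometric_indicator_series)
  also have "\<dots> = 1 + (\<Sum>m. ennreal (E ^ Suc m) * emeasure M {..< - (real m * K)})"
    using M.emeasure_space_1 by (simp add: nn_integral_add nn_integral_suminf nn_integral_cmult_indicator)
  also have "\<dots> \<le> 1 + (\<Sum>m. ennreal (E ^ Suc m * \<rho> ^ m))"
    using \<open>1 < E\<close> assms(3) tail'
    by (intro add_left_mono suminf_le summableI) (simp_all add: mult_left_mono ennreal_mult)
  also have "\<dots> < \<infinity>"
    using summable_geom \<open>1 < E\<close> assms(3) by (simp add: ennreal_suminf_neq_top less_top)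
  finally have "laplace M (- (ln E / K)) < \<infinity>" .
  moreover have "0 < ln E / K"
    using \<open>1 < E\<close> assms(2) by simp
  ultimately show ?thesis
    by blast
qed

lemma laplace_finite_left_of_zero:
  assumes "real_distribution M" "0 \<le> r" "r < 1"
    and neg: "\<And>n. n \<ge> 1 \<Longrightarrow> emeasure (conv_pow M n) {..<0} \<le> ennreal (r ^ n)"
  shows "\<exists>\<eta>>0. laplace M (- \<eta>) < \<infinity>"
proof -
  interpret M: real_distribution M by fact
  define q where "q = (1 + r) / 2"
  have "r < q" "q < 1"
    using assms(3) by (simp_all add: q_def)
  from M.cdf_lim_infty_prob have "\<forall>\<^sub>F k in sequentially. q < measure M {..real k}"
    using \<open>q < 1\<close> by (auto simp: cdf_def2 dest: order_tendstoD)
  then obtain k where "\<forall>n\<ge>k. q < measure M {..real n}"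
    by (auto simp: eventually_sequentially)
  then have k: "q < measure M {..real (Suc k)}"
    using le_SucI by blast
  have "measure M {..< - (real (Suc n) * real (Suc k))} \<le> (r / q) ^ Suc n" for n
    using assms(2) \<open>r < q\<close> k by (intro measure_lower_tail_le assms(1) neg) auto
  then show ?thesis
    using assms(2) \<open>r < q\<close> \<open>q < 1\<close>
    by (intro laplace_finite_of_geometric_tail[OF assms(1), of "real (Suc k)" "r / q"]) auto
qed

lemma laplace_le_near_zero:
  assumes "real_distribution K" "a < 0" "laplace K a < \<infinity>" "1 < h"
  shows "\<exists>\<delta>>0. \<forall>s. - \<delta> \<le> s \<and> s \<le> 0 \<longrightarrow> laplace K s \<le> ennreal h"
proof -
  interpret K: real_distribution K by fact
  define H where "H = enn2real (laplace K a)"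
  have "0 \<le> H" "laplace K a = ennreal H"
    using assms(3) by (simp_all add: H_def ennreal_enn2real_if)
  define \<theta>\<^sub>0 where "\<theta>\<^sub>0 = min 1 ((h - 1) / (H + 1))"
  have "0 < \<theta>\<^sub>0" "\<theta>\<^sub>0 \<le> 1"
    using assms(4) \<open>0 \<le> H\<close> by (simp_all add: \<theta>\<^sub>0_def)
  have "\<theta>\<^sub>0 * H \<le> h - 1"
  proof -
    have "\<theta>\<^sub>0 * H \<le> (h - 1) / (H + 1) * (H + 1)"
      using \<open>0 \<le> H\<close> \<open>0 < \<theta>\<^sub>0\<close> unfolding \<theta>\<^sub>0_def by (intro mult_mono) auto
    then show ?thesis
      using \<open>0 \<le> H\<close> by simp
  qed
  show ?thesis
  proof (intro exI conjI allI impI)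
    show "0 < - a * \<theta>\<^sub>0"
      using assms(2) \<open>0 < \<theta>\<^sub>0\<close> by (simp add: mult_neg_pos)
    fix s assume s: "- (- a * \<theta>\<^sub>0) \<le> s \<and> s \<le> 0"
    define \<theta> where "\<theta> = s / a"
    have "0 \<le> \<theta>" "\<theta> \<le> \<theta>\<^sub>0" "s = \<theta> * a"
      using s assms(2) by (auto simp: \<theta>_def field_simps)
    have "laplace K s \<le> ennreal \<theta> * laplace K a + ennreal (1 - \<theta>)"
      using laplace_mult_le[of K \<theta> a] \<open>0 \<le> \<theta>\<close> \<open>\<theta> \<le> \<theta>\<^sub>0\<close> \<open>\<theta>\<^sub>0 \<le> 1\<close> \<open>s = \<theta> * a\<close>
      by (simp add: K.prob_space_axioms)
    also have "\<dots> = ennreal (\<theta> * H + (1 - \<theta>))"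
      using \<open>0 \<le> \<theta>\<close> \<open>\<theta> \<le> \<theta>\<^sub>0\<close> \<open>\<theta>\<^sub>0 \<le> 1\<close> \<open>0 \<le> H\<close> \<open>laplace K a = ennreal H\<close>
      by (simp flip: ennreal_mult ennreal_plus)
    also have "\<dots> \<le> ennreal h"
      using \<open>0 \<le> \<theta>\<close> \<open>\<theta> \<le> \<theta>\<^sub>0\<close> \<open>0 \<le> H\<close> \<open>\<theta>\<^sub>0 * H \<le> h - 1\<close>
      by (intro ennreal_leI) (smt (verit) mult_right_mono)
    finally show "laplace K s \<le> ennreal h" .
  qed
qed

lemma laplace_less_one_between:
  assumes "prob_space K" "sets K = sets borel" "a \<le> s" "s < 0" "laplace K a < 1"
  shows "laplace K s < 1"
proof -
  define r where "r = enn2real (laplace K a)"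
  have "laplace K a = ennreal r"
    using assms(5) by (auto simp: r_def ennreal_enn2real_if)
  have "0 \<le> r"
    by (simp add: r_def)
  have "r < 1"
    using assms(5) \<open>laplace K a = ennreal r\<close> by simp
  define \<theta> where "\<theta> = s / a"
  have "0 < \<theta>" "\<theta> \<le> 1" "s = \<theta> * a"
    using assms(3,4) by (auto simp: \<theta>_def field_simps)
  have "laplace K s \<le> ennreal \<theta> * laplace K a + ennreal (1 - \<theta>)"
    using laplace_mult_le[OF assms(1,2), of \<theta> a] \<open>0 < \<theta>\<close> \<open>\<theta> \<le> 1\<close> \<open>s = \<theta> * a\<close> by simp
  also have "\<dots> = ennreal (\<theta> * r + (1 - \<theta>))"
    using \<open>0 < \<theta>\<close> \<open>\<theta> \<le> 1\<close> \<open>0 \<le> r\<close> \<open>laplace K a = ennreal r\<close>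
    by (simp flip: ennreal_mult ennreal_plus)
  also have "\<dots> < 1"
    using \<open>0 < \<theta>\<close> \<open>r < 1\<close> by (simp add: ennreal_less_one_iff)
  finally show ?thesis .
qed

lemma ennreal_less_one_of_power_le:
  fixes x :: ennreal and a b c :: real
  assumes "0 \<le> a" "a < 1" "0 \<le> b" "b < 1" "0 \<le> c" "c < 1"
    and le: "\<And>n. n \<ge> 1 \<Longrightarrow> x ^ n \<le> ennreal a ^ n + ennreal b ^ n + ennreal c ^ n"
  shows "x < 1"
proof -
  obtain k where "\<And>n. n \<ge> k \<Longrightarrow> a ^ n + b ^ n + c ^ n < 1"
    using eventually_sum_powers_less_one[OF assms(1-6)] by (auto simp: eventually_sequentially)
  then have "ennreal a ^ Suc k + ennreal b ^ Suc k + ennreal c ^ Suc k < 1"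
    using assms(1,3,5) by (simp add: ennreal_power del: power_Suc flip: ennreal_plus)
  then have "x ^ Suc k < 1"
    using le[of "Suc k"] by simp
  then show ?thesis
    using one_le_power[of x "Suc k"] by (meson leD leI)
qed

lemma laplace_power_le_of_same_pos_powers:
  assumes "same_pos_powers M N" "real_distribution M" "real_distribution N" "n \<ge> 1" "0 < T"
  shows "laplace M l ^ n \<le>
    laplace N l ^ n + (ennreal T * emeasure (conv_pow M n) {..<0} + ennreal (1 / T) * laplace M (2 * l) ^ n)"
proof -
  have "laplace M l ^ n = laplace (conv_pow M n) l"
    by (simp add: laplace_conv_pow assms(2))
  also have "\<dots> = laplace_nonneg_part (conv_pow N n) l + laplace_neg_part (conv_pow M n) l"
    by (simp only: laplace_split[OF sets_conv_pow[OF assms(2)]]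
        same_pos_powers_laplace_nonneg_part[OF assms(1,4,2,3)])
  also have "\<dots> \<le> laplace (conv_pow N n) l +
      (ennreal T * emeasure (conv_pow M n) {..<0} + ennreal (1 / T) * laplace (conv_pow M n) (2 * l))"
    by (intro add_mono laplace_nonneg_part_le laplace_neg_part_le_split sets_conv_pow assms(2,5))
  finally show ?thesis
    by (simp only: laplace_conv_pow assms(2,3))
qed

text \<open>Taking \<open>T = t\<^sup>n\<close> with \<open>h < t < 1/r\<close> bounds \<open>\<phi>\<^sub>M(l)\<^sup>n\<close> by a sum of three geometrically decaying
  terms.\<close>

lemma laplace_less_one_of_same_pos_powers:
  assumes "same_pos_powers M N" "real_distribution M" "real_distribution N"
    and "laplace N l < 1" "0 \<le> r" "0 < h" "r * h < 1"
    and neg: "\<And>n. n \<ge> 1 \<Longrightarrow> emeasure (conv_pow M n) {..<0} \<le> ennreal (r ^ n)"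
    and "laplace M (2 * l) \<le> ennreal h"
  shows "laplace M l < 1"
proof -
  define A where "A = enn2real (laplace N l)"
  have "laplace N l = ennreal A"
    using assms(4) by (auto simp: A_def ennreal_enn2real_if)
  have "0 \<le> A"
    by (simp add: A_def)
  have "A < 1"
    using assms(4) \<open>laplace N l = ennreal A\<close> by simp
  define t where "t = 2 * h / (1 + r * h)"
  have "0 < 1 + r * h"
    using assms(5,6) by (simp add: add_pos_nonneg)
  then have "0 < t" "t * r < 1" "h / t < 1"
    using assms(5-7) by (simp_all add: t_def divide_less_eq field_simps)
  show ?thesis
  proof (rule ennreal_less_one_of_power_le)
    fix n :: nat assume "n \<ge> 1"
    have "laplace M l ^ n \<le> laplace N l ^ n +
        (ennreal (t ^ n) * emeasure (conv_pow M n) {..<0} + ennreal (1 / t ^ n) * laplace M (2 * l) ^ n)"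
      using \<open>0 < t\<close> by (intro laplace_power_le_of_same_pos_powers assms(1-3) \<open>n \<ge> 1\<close>) simp
    also have "\<dots> \<le> laplace N l ^ n + (ennreal (t ^ n) * ennreal (r ^ n) + ennreal (1 / t ^ n) * ennreal h ^ n)"
      by (intro add_mono mult_left_mono power_mono neg \<open>n \<ge> 1\<close> assms(9) order.refl) simp_all
    also have "\<dots> = ennreal A ^ n + ennreal (t * r) ^ n + ennreal (h / t) ^ n"
      using \<open>0 < t\<close> assms(5,6)
      by (simp add: \<open>laplace N l = ennreal A\<close> ennreal_power power_mult_distrib power_divide add.assoc
          flip: ennreal_mult)
    finally show "laplace M l ^ n \<le> ennreal A ^ n + ennreal (t * r) ^ n + ennreal (h / t) ^ n" .
  qed (use \<open>0 \<le> A\<close> \<open>A < 1\<close> \<open>0 < t\<close> \<open>t * r < 1\<close> \<open>h / t < 1\<close> assms(5,6) in auto)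
qed

lemma emeasure_conv_pow_lessThan_zero_le:
  assumes "same_pos_powers M N" "real_distribution M" "real_distribution N" "n \<ge> 1" "l \<le> 0"
  shows "emeasure (conv_pow M n) {..<0} \<le> laplace N l ^ n"
proof -
  have "emeasure (conv_pow M n) {..<0} = emeasure (conv_pow N n) {..<0}"
    by (rule same_pos_powers_emeasure_lessThan_zero[OF assms(1,4,2,3)])
  also have "\<dots> \<le> laplace (conv_pow N n) l"
    by (intro emeasure_lessThan_zero_le_laplace sets_conv_pow assms(3,5))
  finally show ?thesis
    by (simp only: laplace_conv_pow assms(3))
qed

lemma cond_a_of_same_pos_powers:
  assumes "same_pos_powers M N" "real_distribution M" "real_distribution N" "cond_a N"
  shows "cond_a M"
proof -
  obtain l\<^sub>0 where "l\<^sub>0 < 0" "laplace N l\<^sub>0 < 1"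
    using assms(4) unfolding cond_a_def by blast
  define r where "r = enn2real (laplace N l\<^sub>0)"
  have "laplace N l\<^sub>0 = ennreal r"
    using \<open>laplace N l\<^sub>0 < 1\<close> by (auto simp: r_def ennreal_enn2real_if)
  have "0 \<le> r"
    by (simp add: r_def)
  have "r < 1"
    using \<open>laplace N l\<^sub>0 < 1\<close> \<open>laplace N l\<^sub>0 = ennreal r\<close> by simp
  have neg: "emeasure (conv_pow M n) {..<0} \<le> ennreal (r ^ n)" if "n \<ge> 1" for n
    using emeasure_conv_pow_lessThan_zero_le[OF assms(1-3) that, of l\<^sub>0] \<open>l\<^sub>0 < 0\<close> \<open>0 \<le> r\<close>
    by (simp add: \<open>laplace N l\<^sub>0 = ennreal r\<close> ennreal_power)
  obtain \<eta> where "\<eta> > 0" "laplace M (- \<eta>) < \<infinity>"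
    using laplace_finite_left_of_zero[OF assms(2) \<open>0 \<le> r\<close> \<open>r < 1\<close> neg] by blast
  define h where "h = 2 / (1 + r)"
  have "1 < h" "r * h < 1"
    using \<open>0 \<le> r\<close> \<open>r < 1\<close> by (simp_all add: h_def field_simps)
  obtain \<delta> where "\<delta> > 0" and \<delta>: "\<And>s. - \<delta> \<le> s \<Longrightarrow> s \<le> 0 \<Longrightarrow> laplace M s \<le> ennreal h"
    using laplace_le_near_zero[OF assms(2) _ \<open>laplace M (- \<eta>) < \<infinity>\<close> \<open>1 < h\<close>] \<open>\<eta> > 0\<close> by auto
  define l where "l = max l\<^sub>0 (- \<delta> / 2)"
  have "l < 0" "l\<^sub>0 \<le> l" "- \<delta> \<le> 2 * l"
    using \<open>l\<^sub>0 < 0\<close> \<open>\<delta> > 0\<close> by (auto simp: l_def)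
  interpret N: real_distribution N by fact
  have "laplace N l < 1"
    by (rule laplace_less_one_between[OF N.prob_space_axioms N.events_eq_borel
          \<open>l\<^sub>0 \<le> l\<close> \<open>l < 0\<close> \<open>laplace N l\<^sub>0 < 1\<close>])
  moreover have "laplace M (2 * l) \<le> ennreal h"
    using \<open>- \<delta> \<le> 2 * l\<close> \<open>l < 0\<close> by (intro \<delta>) auto
  ultimately have "laplace M l < 1"
    using \<open>1 < h\<close>
    by (intro laplace_less_one_of_same_pos_powers[OF assms(1-3) _ \<open>0 \<le> r\<close> _ \<open>r * h < 1\<close> neg]) auto
  then show ?thesis
    unfolding cond_a_def using \<open>l < 0\<close> by blast
qed

lemma laplace_eq_of_same_pos_powers:
  assumes "same_pos_powers M N" "real_distribution M" "real_distribution N"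
    and "l\<^sub>N \<le> t" "laplace N l\<^sub>N < laplace N t" "laplace N t < \<infinity>"
    and "l\<^sub>M \<le> t" "laplace M l\<^sub>M < laplace M t" "laplace M t < \<infinity>"
  shows "laplace M t = laplace N t"
  using laplace_le_of_same_pos_powers[OF assms(1-6)]
    laplace_le_of_same_pos_powers[OF same_pos_powers_sym[OF assms(1)] assms(3,2,7-9)]
  by simp

lemma laplace_eq_on_interval_of_cond_b:
  assumes "same_pos_powers M N" "real_distribution M" "real_distribution N" "cond_b N"
  shows "\<exists>p q. p < q \<and> (\<forall>t. p < t \<and> t < q \<longrightarrow> laplace M t < \<infinity> \<and> laplace M t = laplace N t)"
proof -
  interpret M: real_distribution M by fact
  interpret N: real_distribution N by fact
  have "laplace M 0 = 1" "laplace N 0 = 1"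
    by (simp_all add: laplace_zero M.prob_space_axioms N.prob_space_axioms)
  obtain l where l: "l > 0" "1 < laplace N l" "laplace N l < \<infinity>"
    using assms(4) unfolding cond_b_def by blast
  obtain \<delta> where "\<delta> > 0" and \<delta>: "\<And>t. l - \<delta> \<le> t \<and> t \<le> l \<Longrightarrow> 1 < laplace N t"
    using laplace_gt_on_left_interval[OF N.events_eq_borel l(2)] by blast
  show ?thesis
  proof (intro exI conjI allI impI)
    show "max (l - \<delta>) 0 < l"
      using l \<open>\<delta> > 0\<close> by auto
    fix t assume "max (l - \<delta>) 0 < t \<and> t < l"
    then have "0 \<le> t" "t \<le> l" "l - \<delta> \<le> t"
      by auto
    then have "1 < laplace N t"
      by (simp add: \<delta>)
    have "laplace N t < \<infinity>"
      using \<open>laplace N 0 = 1\<close>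
      by (intro laplace_finite_between[OF N.events_eq_borel \<open>0 \<le> t\<close> \<open>t \<le> l\<close> _ l(3)]) simp
    then have "laplace N t \<le> laplace M t"
      using \<open>1 < laplace N t\<close> \<open>laplace N 0 = 1\<close>
      by (intro laplace_le_of_same_pos_powers[OF assms(1-3) \<open>0 \<le> t\<close>]) simp_all
    show "laplace M t < \<infinity>"
      by (rule laplace_finite_of_same_pos_powers[OF assms(1-3) \<open>0 \<le> t\<close> \<open>laplace N t < \<infinity>\<close>])
    then show "laplace M t = laplace N t"
      using \<open>1 < laplace N t\<close> \<open>laplace N t < \<infinity>\<close> \<open>laplace N t \<le> laplace M t\<close> \<open>laplace M 0 = 1\<close>
        \<open>laplace N 0 = 1\<close>
      by (intro laplace_eq_of_same_pos_powers[OF assms(1-3) \<open>0 \<le> t\<close> _ _ \<open>0 \<le> t\<close>]) auto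
  qed
qed

lemma laplace_eq_on_interval_of_cond_a:
  assumes "same_pos_powers M N" "real_distribution M" "real_distribution N" "cond_a N"
  shows "\<exists>p q. p < q \<and> (\<forall>t. p < t \<and> t < q \<longrightarrow> laplace M t < \<infinity> \<and> laplace M t = laplace N t)"
proof -
  interpret M: real_distribution M by fact
  interpret N: real_distribution N by fact
  have "laplace M 0 = 1" "laplace N 0 = 1"
    by (simp_all add: laplace_zero M.prob_space_axioms N.prob_space_axioms)
  obtain l\<^sub>N where "l\<^sub>N < 0" "laplace N l\<^sub>N < 1"
    using assms(4) unfolding cond_a_def by blast
  obtain l\<^sub>M where "l\<^sub>M < 0" "laplace M l\<^sub>M < 1"
    using cond_a_of_same_pos_powers[OF assms] unfolding cond_a_def by blast
  obtain \<delta>\<^sub>N where "\<delta>\<^sub>N > 0" and \<delta>\<^sub>N: "\<And>t. 0 - \<delta>\<^sub>N \<le> t \<and> t \<le> 0 \<Longrightarrow> laplace N l\<^sub>N < laplace N t"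
    using laplace_gt_on_left_interval[OF N.events_eq_borel, of "laplace N l\<^sub>N" 0]
      \<open>laplace N l\<^sub>N < 1\<close> \<open>laplace N 0 = 1\<close> by auto
  obtain \<delta>\<^sub>M where "\<delta>\<^sub>M > 0" and \<delta>\<^sub>M: "\<And>t. 0 - \<delta>\<^sub>M \<le> t \<and> t \<le> 0 \<Longrightarrow> laplace M l\<^sub>M < laplace M t"
    using laplace_gt_on_left_interval[OF M.events_eq_borel, of "laplace M l\<^sub>M" 0]
      \<open>laplace M l\<^sub>M < 1\<close> \<open>laplace M 0 = 1\<close> by auto
  show ?thesis
  proof (intro exI conjI allI impI)
    show "max (max l\<^sub>N l\<^sub>M) (- min \<delta>\<^sub>N \<delta>\<^sub>M) < 0"
      using \<open>l\<^sub>N < 0\<close> \<open>l\<^sub>M < 0\<close> \<open>\<delta>\<^sub>N > 0\<close> \<open>\<delta>\<^sub>M > 0\<close> by auto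
    fix t assume "max (max l\<^sub>N l\<^sub>M) (- min \<delta>\<^sub>N \<delta>\<^sub>M) < t \<and> t < 0"
    then have "l\<^sub>N \<le> t" "l\<^sub>M \<le> t" "- \<delta>\<^sub>N \<le> t" "- \<delta>\<^sub>M \<le> t" "t \<le> 0"
      by auto
    have "laplace N l\<^sub>N < \<infinity>" "laplace M l\<^sub>M < \<infinity>"
      using \<open>laplace N l\<^sub>N < 1\<close> \<open>laplace M l\<^sub>M < 1\<close> by (auto simp: less_top[symmetric])
    have "laplace N t < \<infinity>"
      using \<open>laplace N 0 = 1\<close>
      by (intro laplace_finite_between[OF N.events_eq_borel \<open>l\<^sub>N \<le> t\<close> \<open>t \<le> 0\<close> \<open>laplace N l\<^sub>N < \<infinity>\<close>]) simp
    moreover show "laplace M t < \<infinity>"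
      using \<open>laplace M 0 = 1\<close>
      by (intro laplace_finite_between[OF M.events_eq_borel \<open>l\<^sub>M \<le> t\<close> \<open>t \<le> 0\<close> \<open>laplace M l\<^sub>M < \<infinity>\<close>]) simp
    moreover have "laplace N l\<^sub>N < laplace N t" "laplace M l\<^sub>M < laplace M t"
      using \<open>- \<delta>\<^sub>N \<le> t\<close> \<open>- \<delta>\<^sub>M \<le> t\<close> \<open>t \<le> 0\<close> by (simp_all add: \<delta>\<^sub>N \<delta>\<^sub>M)
    ultimately show "laplace M t = laplace N t"
      by (intro laplace_eq_of_same_pos_powers[OF assms(1-3) \<open>l\<^sub>N \<le> t\<close> _ _ \<open>l\<^sub>M \<le> t\<close>])
  qed
qed

section \<open>Uniqueness of the moment generating function\<close>

definition complex_laplace :: "real measure \<Rightarrow> complex \<Rightarrow> complex" where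
  "complex_laplace M z = (CLINT x|M. exp (z * complex_of_real x))"

lemma complex_laplace_of_real:
  "complex_laplace M (complex_of_real t) = complex_of_real (\<integral>x. exp (t * x) \<partial>M)"
  unfolding complex_laplace_def by (simp flip: exp_of_real integral_complex_of_real)

lemma exp_series_partial_sum_le:
  fixes \<rho> c x :: real
  assumes "0 \<le> \<rho>"
  shows "(\<Sum>n<N. (\<rho> * \<bar>x\<bar>) ^ n / fact n) * exp (c * x) \<le> exp ((c - \<rho>) * x) + exp ((c + \<rho>) * x)"
proof -
  have "(\<lambda>n. (\<rho> * \<bar>x\<bar>) ^ n / fact n) sums exp (\<rho> * \<bar>x\<bar>)"
    using exp_converges[of "\<rho> * \<bar>x\<bar>"] by (simp add: divide_inverse_commute)
  then have "summable (\<lambda>n. (\<rho> * \<bar>x\<bar>) ^ n / fact n)" "exp (\<rho> * \<bar>x\<bar>) = (\<Sum>n. (\<rho> * \<bar>x\<bar>) ^ n / fact n)"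
    by (simp_all add: sums_iff)
  then have "(\<Sum>n<N. (\<rho> * \<bar>x\<bar>) ^ n / fact n) \<le> exp (\<rho> * \<bar>x\<bar>)"
    using assms by (auto intro: sum_le_suminf)
  then have "(\<Sum>n<N. (\<rho> * \<bar>x\<bar>) ^ n / fact n) * exp (c * x) \<le> exp (\<rho> * \<bar>x\<bar> + c * x)"
    by (simp add: exp_add mult_right_mono)
  also have "\<dots> \<le> exp ((c - \<rho>) * x) + exp ((c + \<rho>) * x)"
    by (cases "x \<ge> 0") (simp_all add: algebra_simps add_increasing add_increasing2)
  finally show ?thesis .
qed

lemma sums_integral_of_dominated:
  fixes f :: "nat \<Rightarrow> 'a \<Rightarrow> 'b::{banach, second_countable_topology}"
  assumes "integrable M g" "\<And>n. f n \<in> borel_measurable M"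
    and partial: "\<And>N x. (\<Sum>n<N. norm (f n x)) \<le> g x"
  shows "(\<lambda>n. integral\<^sup>L M (f n)) sums (\<integral>x. (\<Sum>n. f n x) \<partial>M)"
proof -
  have int: "integrable M (f n)" for n
  proof (rule Bochner_Integration.integrable_bound[OF assms(1,2)])
    show "AE x in M. norm (f n x) \<le> norm (g x)"
      using order_trans[OF member_le_sum[of n "{..<Suc n}" "\<lambda>n. norm (f n _)"] partial]
        order_trans[OF _ abs_ge_self] by auto
  qed
  have "summable (\<lambda>n. \<integral>x. norm (f n x) \<partial>M)"
  proof (rule summableI_nonneg_bounded)
    fix N
    have "(\<Sum>n<N. \<integral>x. norm (f n x) \<partial>M) = (\<integral>x. (\<Sum>n<N. norm (f n x)) \<partial>M)"
      using int by (simp add: Bochner_Integration.integral_sum)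
    also have "\<dots> \<le> integral\<^sup>L M g"
      using int assms(1) partial by (intro integral_mono) auto
    finally show "(\<Sum>n<N. \<integral>x. norm (f n x) \<partial>M) \<le> integral\<^sup>L M g" .
  qed simp
  moreover have "summable (\<lambda>n. norm (f n x))" for x
    using partial by (intro summableI_nonneg_bounded) auto
  ultimately show ?thesis
    using int by (intro sums_integral) auto
qed

lemma complex_laplace_sums:
  assumes [measurable_cong]: "sets M = sets borel"
    and "laplace M (Re z\<^sub>0 - cmod (w - z\<^sub>0)) < \<infinity>" "laplace M (Re z\<^sub>0 + cmod (w - z\<^sub>0)) < \<infinity>"
  shows "(\<lambda>n. ((CLINT x|M. complex_of_real x ^ n * exp (z\<^sub>0 * complex_of_real x)) / fact n) * (w - z\<^sub>0) ^ n)
           sums complex_laplace M w"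
proof -
  define \<rho> c where "\<rho> = cmod (w - z\<^sub>0)" and "c = Re z\<^sub>0"
  define f where "f n x = ((w - z\<^sub>0) ^ n / fact n) * (complex_of_real x ^ n * exp (z\<^sub>0 * complex_of_real x))"
    for n x
  have "(\<lambda>n. integral\<^sup>L M (f n)) sums (\<integral>x. (\<Sum>n. f n x) \<partial>M)"
  proof (rule sums_integral_of_dominated)
    show "integrable M (\<lambda>x. exp ((c - \<rho>) * x) + exp ((c + \<rho>) * x))"
      using integrable_exp_of_laplace_finite[OF assms(1,2)] integrable_exp_of_laplace_finite[OF assms(1,3)]
      unfolding \<rho>_def c_def by simp
    fix N x
    have "norm (f n x) = (\<rho> * \<bar>x\<bar>) ^ n / fact n * exp (c * x)" for n
      by (simp add: f_def norm_mult norm_divide norm_power norm_exp_eq_Re \<rho>_def c_def power_mult_distrib)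
    then have "(\<Sum>n<N. norm (f n x)) = (\<Sum>n<N. (\<rho> * \<bar>x\<bar>) ^ n / fact n) * exp (c * x)"
      by (simp add: sum_distrib_right)
    also have "\<dots> \<le> exp ((c - \<rho>) * x) + exp ((c + \<rho>) * x)"
      by (rule exp_series_partial_sum_le) (simp add: \<rho>_def)
    finally show "(\<Sum>n<N. norm (f n x)) \<le> exp ((c - \<rho>) * x) + exp ((c + \<rho>) * x)" .
  qed (unfold f_def, measurable)
  moreover have "(\<lambda>n. f n x) sums exp (w * complex_of_real x)" for x
  proof -
    have "(\<lambda>n. ((w - z\<^sub>0) * of_real x) ^ n /\<^sub>R fact n * exp (z\<^sub>0 * of_real x)) sums
        (exp ((w - z\<^sub>0) * of_real x) * exp (z\<^sub>0 * of_real x))"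
      by (intro sums_mult2 exp_converges)
    moreover have "((w - z\<^sub>0) * of_real x) ^ n /\<^sub>R fact n * exp (z\<^sub>0 * of_real x) = f n x" for n
      by (simp add: f_def scaleR_conv_of_real power_mult_distrib divide_inverse mult_ac)
    moreover have "exp ((w - z\<^sub>0) * of_real x) * exp (z\<^sub>0 * of_real x) = exp (w * complex_of_real x)"
      by (simp add: algebra_simps flip: exp_add)
    ultimately show ?thesis
      by simp
  qed
  moreover have "integral\<^sup>L M (f n) =
      ((CLINT x|M. complex_of_real x ^ n * exp (z\<^sub>0 * complex_of_real x)) / fact n) * (w - z\<^sub>0) ^ n" for n
    unfolding f_def by (simp add: integral_mult_right_zero)
  ultimately show ?thesis
    by (simp add: complex_laplace_def sums_iff)
qed

lemma complex_laplace_holomorphic: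
  assumes [measurable_cong]: "sets M = sets borel"
    and fin: "\<And>t. a < t \<Longrightarrow> t < b \<Longrightarrow> laplace M t < \<infinity>"
  shows "complex_laplace M holomorphic_on {z. a < Re z \<and> Re z < b}"
proof -
  have "open {z. a < Re z \<and> Re z < b}"
    using open_Int[OF open_halfspace_Re_gt open_halfspace_Re_lt] by (simp add: Collect_conj_eq)
  then show ?thesis
    unfolding holomorphic_on_open[OF \<open>open _\<close>]
  proof (intro ballI)
    fix z\<^sub>0 assume z\<^sub>0: "z\<^sub>0 \<in> {z. a < Re z \<and> Re z < b}"
    define r where "r = min (Re z\<^sub>0 - a) (b - Re z\<^sub>0)"
    have "complex_laplace M holomorphic_on ball z\<^sub>0 r"
    proof (rule power_series_holomorphic)
      fix w assume "w \<in> ball z\<^sub>0 r"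
      then have "cmod (w - z\<^sub>0) < r"
        by (simp add: dist_norm norm_minus_commute)
      then have "a < Re z\<^sub>0 - cmod (w - z\<^sub>0)" "Re z\<^sub>0 + cmod (w - z\<^sub>0) < b"
        by (simp_all add: r_def)
      then show "(\<lambda>n. ((CLINT x|M. complex_of_real x ^ n * exp (z\<^sub>0 * complex_of_real x)) / fact n) *
          (w - z\<^sub>0) ^ n) sums complex_laplace M w"
        using norm_ge_zero[of "w - z\<^sub>0"] by (intro complex_laplace_sums assms(1) fin) linarith+
    qed
    moreover have "0 < r"
      using z\<^sub>0 by (simp add: r_def)
    ultimately have "complex_laplace M field_differentiable at z\<^sub>0"
      by (intro holomorphic_on_imp_differentiable_at[of _ "ball z\<^sub>0 r"]) auto
    then show "\<exists>f'. (complex_laplace M has_field_derivative f') (at z\<^sub>0)"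
      by (simp add: field_differentiable_def)
  qed
qed

lemma complex_laplace_eq_on_strip:
  assumes "sets M\<^sub>1 = sets borel" "sets M\<^sub>2 = sets borel" "a < b"
    and fin: "\<And>t. a < t \<Longrightarrow> t < b \<Longrightarrow> laplace M\<^sub>1 t < \<infinity> \<and> laplace M\<^sub>2 t < \<infinity>"
    and eq: "\<And>t. a < t \<Longrightarrow> t < b \<Longrightarrow> (\<integral>x. exp (t * x) \<partial>M\<^sub>1) = (\<integral>x. exp (t * x) \<partial>M\<^sub>2)"
    and "a < Re z" "Re z < b"
  shows "complex_laplace M\<^sub>1 z = complex_laplace M\<^sub>2 z"
proof -
  let ?S = "{z. a < Re z \<and> Re z < b}"
  define c where "c = (a + b) / 2"
  have "a < c" "c < b"
    using assms(3) by (simp_all add: c_def)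
  have "complex_laplace M\<^sub>1 z - complex_laplace M\<^sub>2 z = 0"
  proof (rule analytic_continuation[where f = "\<lambda>z. complex_laplace M\<^sub>1 z - complex_laplace M\<^sub>2 z"
        and S = ?S and U = "complex_of_real ` {a<..<b}" and \<xi> = "complex_of_real c"])
    show "(\<lambda>z. complex_laplace M\<^sub>1 z - complex_laplace M\<^sub>2 z) holomorphic_on ?S"
      using fin by (intro holomorphic_on_diff complex_laplace_holomorphic assms(1,2)) auto
    show "open ?S"
      using open_Int[OF open_halfspace_Re_gt open_halfspace_Re_lt] by (simp add: Collect_conj_eq)
    show "connected ?S"
      using convex_connected[OF convex_Int[OF convex_halfspace_Re_gt convex_halfspace_Re_lt]]
      by (simp add: Collect_conj_eq)
    have "c islimpt {c<..<b}"
      using \<open>c < b\<close> by (rule islimpt_greaterThanLessThan1)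
    then have "c islimpt {a<..<b}"
      by (rule islimpt_subset) (use \<open>a < c\<close> in auto)
    then show "complex_of_real c islimpt complex_of_real ` {a<..<b}"
      by (intro islimpt_isCont_image) (auto simp: eventually_at_filter)
  qed (use assms \<open>a < c\<close> \<open>c < b\<close> in \<open>auto simp: complex_laplace_of_real\<close>)
  then show ?thesis
    by simp
qed

definition exp_tilt :: "real measure \<Rightarrow> real \<Rightarrow> real measure" where
  "exp_tilt M c = density M (\<lambda>x. ennreal (exp (c * x) / (\<integral>y. exp (c * y) \<partial>M)))"

lemma integral_exp_pos:
  assumes "real_distribution M" "laplace M c < \<infinity>"
  shows "0 < (\<integral>x. exp (c * x) \<partial>M)"
proof -
  interpret M: real_distribution M by fact
  have "integrable M (\<lambda>x. exp (c * x))"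
    using assms(2) by (rule integrable_exp_of_laplace_finite[OF M.events_eq_borel])
  then have "(\<integral>x. exp (c * x) \<partial>M) = 0 \<longleftrightarrow> (AE x in M. exp (c * x) = 0)"
    by (intro integral_nonneg_eq_0_iff_AE) auto
  moreover have "\<not> (AE x in M. False)"
    by (simp add: M.AE_False)
  ultimately show ?thesis
    by (simp add: integral_nonneg_AE order_less_le)
qed

lemma real_distribution_exp_tilt:
  assumes "real_distribution M" "laplace M c < \<infinity>"
  shows "real_distribution (exp_tilt M c)"
proof -
  interpret M: real_distribution M by fact
  define L where "L = (\<integral>x. exp (c * x) \<partial>M)"
  have "0 < L"
    unfolding L_def using assms by (rule integral_exp_pos)
  have "emeasure (exp_tilt M c) UNIV = (\<integral>\<^sup>+ x. ennreal (exp (c * x) / L) \<partial>M)"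
    by (simp add: exp_tilt_def emeasure_density L_def)
  also have "\<dots> = ennreal (\<integral>x. exp (c * x) / L \<partial>M)"
    using integrable_exp_of_laplace_finite[OF M.events_eq_borel assms(2)] \<open>0 < L\<close>
    by (intro nn_integral_eq_integral) auto
  also have "\<dots> = 1"
    using \<open>0 < L\<close> by (simp add: L_def)
  finally have "prob_space (exp_tilt M c)"
    by (intro prob_spaceI) (simp add: exp_tilt_def)
  then show ?thesis
    by (simp add: real_distribution_def real_distribution_axioms_def exp_tilt_def)
qed

lemma char_exp_tilt:
  assumes [measurable_cong]: "sets M = sets borel"
  shows "char (exp_tilt M c) t =
    complex_laplace M (complex_of_real c + \<i> * complex_of_real t) / complex_of_real (\<integral>x. exp (c * x) \<partial>M)"
proof -
  define L where "L = (\<integral>x. exp (c * x) \<partial>M)"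
  have "char (exp_tilt M c) t = (CLINT x|M. (exp (c * x) / L) *\<^sub>R iexp (t * x))"
    unfolding char_def exp_tilt_def L_def
    by (rule integral_density) (auto simp: integral_nonneg_AE)
  also have "\<dots> = (CLINT x|M. exp ((complex_of_real c + \<i> * complex_of_real t) * complex_of_real x) /
      complex_of_real L)"
    by (simp add: scaleR_conv_of_real algebra_simps flip: exp_of_real exp_add)
  also have "\<dots> = complex_laplace M (complex_of_real c + \<i> * complex_of_real t) / complex_of_real L"
    unfolding complex_laplace_def by (rule integral_divide_zero)
  finally show ?thesis
    by (simp add: L_def)
qed

lemma density_exp_tilt_inverse:
  assumes "real_distribution M" "laplace M c < \<infinity>"
  shows "density (exp_tilt M c) (\<lambda>x. ennreal ((\<integral>y. exp (c * y) \<partial>M) / exp (c * x))) = M"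
proof -
  interpret M: real_distribution M by fact
  define L where "L = (\<integral>x. exp (c * x) \<partial>M)"
  have "0 < L"
    unfolding L_def using assms by (rule integral_exp_pos)
  have "density (exp_tilt M c) (\<lambda>x. ennreal (L / exp (c * x))) =
      density M (\<lambda>x. ennreal (exp (c * x) / L) * ennreal (L / exp (c * x)))"
    unfolding exp_tilt_def L_def by (rule density_density_eq) auto
  also have "\<dots> = density M (\<lambda>_. 1)"
    using \<open>0 < L\<close> by (intro density_cong) (auto simp flip: ennreal_mult'')
  also have "\<dots> = M"
    by (rule density_1)
  finally show ?thesis
    by (simp add: L_def)
qed

text \<open>Tilting both measures by \<open>e\<^sup>c\<^sup>x\<close> for a \<open>c\<close> in the interval turns their complex Laplace
  transforms on the line \<open>Re z = c\<close> into characteristic functions.\<close>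

theorem laplace_unique:
  assumes "real_distribution M\<^sub>1" "real_distribution M\<^sub>2" "a < b"
    and fin: "\<And>t. a < t \<Longrightarrow> t < b \<Longrightarrow> laplace M\<^sub>1 t < \<infinity>"
    and eq: "\<And>t. a < t \<Longrightarrow> t < b \<Longrightarrow> laplace M\<^sub>1 t = laplace M\<^sub>2 t"
  shows "M\<^sub>1 = M\<^sub>2"
proof -
  interpret M\<^sub>1: real_distribution M\<^sub>1 by fact
  interpret M\<^sub>2: real_distribution M\<^sub>2 by fact
  have fin2: "laplace M\<^sub>2 t < \<infinity>" if "a < t" "t < b" for t
    using fin[OF that] eq[OF that] by simp
  have int_eq: "(\<integral>x. exp (t * x) \<partial>M\<^sub>1) = (\<integral>x. exp (t * x) \<partial>M\<^sub>2)" if "a < t" "t < b" for t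
    using laplace_eq_integral[OF M\<^sub>1.events_eq_borel fin[OF that]]
      laplace_eq_integral[OF M\<^sub>2.events_eq_borel fin2[OF that]] eq[OF that]
    by (simp add: integral_nonneg_AE)
  define c where "c = (a + b) / 2"
  have "a < c" "c < b"
    using assms(3) by (simp_all add: c_def)
  have "char (exp_tilt M\<^sub>1 c) = char (exp_tilt M\<^sub>2 c)"
  proof
    fix t
    have "complex_laplace M\<^sub>1 (complex_of_real c + \<i> * complex_of_real t) =
        complex_laplace M\<^sub>2 (complex_of_real c + \<i> * complex_of_real t)"
      using \<open>a < c\<close> \<open>c < b\<close> fin fin2 int_eq
      by (intro complex_laplace_eq_on_strip[OF M\<^sub>1.events_eq_borel M\<^sub>2.events_eq_borel assms(3)]) auto
    then show "char (exp_tilt M\<^sub>1 c) t = char (exp_tilt M\<^sub>2 c) t"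
      by (simp add: char_exp_tilt int_eq[OF \<open>a < c\<close> \<open>c < b\<close>])
  qed
  then have "exp_tilt M\<^sub>1 c = exp_tilt M\<^sub>2 c"
    using \<open>a < c\<close> \<open>c < b\<close> fin fin2
    by (intro Levy_uniqueness real_distribution_exp_tilt assms(1,2)) auto
  then show ?thesis
    using density_exp_tilt_inverse[OF assms(1) fin] density_exp_tilt_inverse[OF assms(2) fin2]
      int_eq \<open>a < c\<close> \<open>c < b\<close> by metis
qed

theorem theorem2p7:
  fixes \<mu> :: "real measure"
  assumes "prob_space \<mu>" and "sets \<mu> = sets borel"
    and "\<not> measure_support \<mu> \<subseteq> {..<0}"
  shows "\<forall>\<mu>1. prob_space \<mu>1 \<and> sets \<mu>1 = sets borel \<and> same_pos_powers \<mu>1 \<mu> \<longrightarrow>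
           (cond_a \<mu>1 \<longleftrightarrow> cond_a \<mu>) \<and> (cond_b \<mu>1 \<longleftrightarrow> cond_b \<mu>)
           \<and> ((cond_a \<mu> \<or> cond_b \<mu>) \<longrightarrow> \<mu>1 = \<mu>)"
proof (intro allI impI)
  fix \<mu>1 assume "prob_space \<mu>1 \<and> sets \<mu>1 = sets borel \<and> same_pos_powers \<mu>1 \<mu>"
  then have \<mu>1: "real_distribution \<mu>1" and same: "same_pos_powers \<mu>1 \<mu>"
    by (auto simp: real_distribution_def real_distribution_axioms_def)
  have \<mu>: "real_distribution \<mu>"
    using assms(1,2) by (simp add: real_distribution_def real_distribution_axioms_def)
  note same' = same_pos_powers_sym[OF same]
  have "\<mu>1 = \<mu>" if ab: "cond_a \<mu> \<or> cond_b \<mu>"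
  proof -
    obtain p q where "p < q" and pq: "\<And>t. p < t \<and> t < q \<Longrightarrow> laplace \<mu>1 t < \<infinity> \<and> laplace \<mu>1 t = laplace \<mu> t"
      using ab laplace_eq_on_interval_of_cond_a[OF same \<mu>1 \<mu>] laplace_eq_on_interval_of_cond_b[OF same \<mu>1 \<mu>]
      by blast
    show ?thesis
      by (rule laplace_unique[OF \<mu>1 \<mu> \<open>p < q\<close>]) (use pq in blast)+
  qed
  then show "(cond_a \<mu>1 \<longleftrightarrow> cond_a \<mu>) \<and> (cond_b \<mu>1 \<longleftrightarrow> cond_b \<mu>) \<and> ((cond_a \<mu> \<or> cond_b \<mu>) \<longrightarrow> \<mu>1 = \<mu>)"
    using cond_a_of_same_pos_powers[OF same \<mu>1 \<mu>] cond_a_of_same_pos_powers[OF same' \<mu> \<mu>1]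
      cond_b_of_same_pos_powers[OF same \<mu>1 \<mu>] cond_b_of_same_pos_powers[OF same' \<mu> \<mu>1]
    by blast
qed

end
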